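(* Let $X$ be a nonempty set, $\circ:X\times X\to X$ a binary operation, and $p,q>0$ constants. If $f,g:X\to\mathbb{R}$ are $(\circ,p,q)$-convex functions satisfying \[ 0\leq \max(f(x),g(x))\qquad (x\in X), \] then there exists $\lambda\in[0,1]$ such that \[ 0\leq \lambda f(x)+(1-\lambda)g(x)\qquad (x\in X). \]
   Context: Given a nonempty set $X$, a binary operation $\circ:X\times X\to X$ and constants $p,q>0$, a function $f:X\to\mathbb{R}$ is called $(\circ,p,q)$-convex if $f(x\circ y)\leq p f(x)+q f(y)$ for all $x,y\in X$. *)

theory Defs
  imports Main Complex_Main
begin

definition op_pq_convex :: "('a \<Rightarrow> 'a \<Rightarrow> 'a) \<Rightarrow> real \<Rightarrow> real \<Rightarrow> ('a \<Rightarrow> real) \<Rightarrow> bool" where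
  "op_pq_convex op p q f \<longleftrightarrow> (\<forall>x y. f (op x y) \<le> p * f x + q * f y)"

end

theory Submission
  imports Defs
begin

text \<open>
  Call a pair \<open>(u, v)\<close> dominated if some \<open>(p + q)^n (u, v)\<close> lies componentwise above a value
  pair \<open>(f x, g x)\<close>. By \<open>(\<circ>, p, q)\<close>-convexity the dominated pairs are closed under the convex
  combination with the fixed weights \<open>p/(p+q)\<close>, \<open>q/(p+q)\<close>, and by hypothesis none of them lies in
  the open negative quadrant. A subset of \<open>[0, 1]\<close> containing \<open>0\<close> and \<open>1\<close> and closed under a
  fixed-weight combination is dense, so dominated pairs are dense on the segment joining two value
  pairs. Hence if \<open>f a < 0\<close> and \<open>g b < 0\<close>, the zero of \<open>\<lambda> \<mapsto> \<lambda> f b + (1 - \<lambda>) g b\<close> lies below the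
  zero of \<open>\<lambda> \<mapsto> \<lambda> f a + (1 - \<lambda>) g a\<close>, and any \<open>\<lambda>\<close> separating the zeros at points with \<open>g < 0\<close>
  from those at points with \<open>f < 0\<close> works.
\<close>

lemma unit_interval_separation:
  fixes L U :: "real set"
  assumes "L \<subseteq> {0..1}" and "U \<subseteq> {0..1}" and "\<And>l u. l \<in> L \<Longrightarrow> u \<in> U \<Longrightarrow> l \<le> u"
  shows "\<exists>lam\<in>{0..1}. (\<forall>l\<in>L. l \<le> lam) \<and> (\<forall>u\<in>U. lam \<le> u)"
proof (cases "L = {}")
  case True
  then show ?thesis using assms(2) by (intro bexI[of _ 0]) auto
next
  case False
  then obtain l where "l \<in> L" by blast
  have "bdd_above L" using assms(1) by (intro bdd_aboveI[of _ 1]) auto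
  then have upper: "\<forall>l\<in>L. l \<le> Sup L" by (auto intro: cSup_upper)
  moreover have "0 \<le> Sup L" using upper \<open>l \<in> L\<close> assms(1) by force
  moreover have "Sup L \<le> 1" using False assms(1) by (intro cSup_least) auto
  moreover have "\<forall>u\<in>U. Sup L \<le> u" using False assms(3) by (auto intro: cSup_least)
  ultimately show ?thesis by auto
qed

(* the zero of \<lambda> \<mapsto> \<lambda> u + (1 - \<lambda>) v *)
definition crossing :: "real \<Rightarrow> real \<Rightarrow> real" where
  "crossing u v = v / (v - u)"

lemma crossing_in_unit_interval:
  assumes "0 \<le> max u v" and "u < 0 \<or> v < 0"
  shows "crossing u v \<in> {0..1}"
  using assms unfolding crossing_def by (auto simp: divide_simps le_max_iff_disj)

lemma convex_comb_nonneg_by_crossing: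
  fixes u v lam :: real
  assumes "0 \<le> max u v" and "lam \<in> {0..1}"
    and "v < 0 \<Longrightarrow> crossing u v \<le> lam" and "u < 0 \<Longrightarrow> lam \<le> crossing u v"
  shows "0 \<le> lam * u + (1 - lam) * v"
proof -
  consider "u < 0" | "v < 0" | "0 \<le> u" "0 \<le> v" by linarith
  then show ?thesis
  proof cases
    case 1
    then have "lam * (v - u) \<le> v" using assms unfolding crossing_def by (simp add: pos_le_divide_eq)
    then show ?thesis by (simp add: algebra_simps)
  next
    case 2
    then have "- v \<le> lam * (u - v)"
      using assms unfolding crossing_def by (simp add: neg_divide_le_eq algebra_simps)
    then show ?thesis by (simp add: algebra_simps)
  qed (use assms in simp)
qed

lemma convex_comb_closed_approx:
  fixes T :: "real set" and r t :: real
  assumes "0 \<in> T" and "1 \<in> T" and r: "0 < r" "r < 1"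
    and closed: "\<And>x y. x \<in> T \<Longrightarrow> y \<in> T \<Longrightarrow> r * x + (1 - r) * y \<in> T"
    and "0 \<le> t" "t \<le> 1"
  shows "\<exists>s\<in>T. \<bar>s - t\<bar> \<le> max r (1 - r) ^ n"
  using \<open>0 \<le> t\<close> \<open>t \<le> 1\<close>
proof (induction n arbitrary: t)
  case 0
  then show ?case using \<open>0 \<in> T\<close> by force
next
  case (Suc n)
  let ?M = "max r (1 - r)"
  have M_pow: "0 \<le> ?M ^ n" using r by simp
  show ?case
  proof (cases "r \<le> t")
    case True
    define t' where "t' = (t - r) / (1 - r)"
    have "0 \<le> t'" "t' \<le> 1" unfolding t'_def using True Suc.prems r by (simp_all add: field_simps)
    then obtain s' where s': "s' \<in> T" "\<bar>s' - t'\<bar> \<le> ?M ^ n" using Suc.IH by blast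
    have "r * 1 + (1 - r) * s' - t = (1 - r) * (s' - t')" unfolding t'_def using r by (simp add: field_simps)
    then have "\<bar>r * 1 + (1 - r) * s' - t\<bar> = (1 - r) * \<bar>s' - t'\<bar>" using r by (simp only: abs_mult)
    also have "\<dots> \<le> ?M * ?M ^ n" using s'(2) r M_pow by (intro mult_mono) auto
    finally show ?thesis using closed[OF \<open>1 \<in> T\<close> s'(1)] by auto
  next
    case False
    define t' where "t' = t / r"
    have "0 \<le> t'" "t' \<le> 1" unfolding t'_def using False Suc.prems r by (simp_all add: field_simps)
    then obtain s' where s': "s' \<in> T" "\<bar>s' - t'\<bar> \<le> ?M ^ n" using Suc.IH by blast
    have "r * s' + (1 - r) * 0 - t = r * (s' - t')" unfolding t'_def using r by (simp add: field_simps)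
    then have "\<bar>r * s' + (1 - r) * 0 - t\<bar> = r * \<bar>s' - t'\<bar>" using r by (simp only: abs_mult)
    also have "\<dots> \<le> ?M * ?M ^ n" using s'(2) r M_pow by (intro mult_mono) auto
    finally show ?thesis using closed[OF s'(1) \<open>0 \<in> T\<close>] by auto
  qed
qed

lemma convex_comb_closed_dense:
  fixes T :: "real set" and r lo hi :: real
  assumes "0 \<in> T" and "1 \<in> T" and r: "0 < r" "r < 1"
    and closed: "\<And>x y. x \<in> T \<Longrightarrow> y \<in> T \<Longrightarrow> r * x + (1 - r) * y \<in> T"
    and "0 \<le> lo" "lo < hi" "hi \<le> 1"
  shows "\<exists>s\<in>T. lo < s \<and> s < hi"
proof -
  obtain n where n: "max r (1 - r) ^ n < (hi - lo) / 2"
    using real_arch_pow_inv[of "(hi - lo) / 2" "max r (1 - r)"] assms by auto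
  obtain s where "s \<in> T" "\<bar>s - (lo + hi) / 2\<bar> \<le> max r (1 - r) ^ n"
    using convex_comb_closed_approx[OF assms(1-5), of "(lo + hi) / 2" n] assms by auto
  moreover from this n have "lo < s" "s < hi" by (auto simp: abs_le_iff field_simps)
  ultimately show ?thesis by blast
qed

lemma op_pq_convex_diag_le:
  assumes "op_pq_convex op p q h"
  shows "h (op x x) \<le> (p + q) * h x"
  using assms unfolding op_pq_convex_def by (simp add: distrib_right)

lemma op_pq_convex_comb_le:
  assumes "op_pq_convex op p q h" and "p > 0" and "q > 0"
    and "h x \<le> c * u" and "h y \<le> c * v"
  shows "h (op x y) \<le> (p + q) * c * (p / (p + q) * u + q / (p + q) * v)"
proof -
  have "p + q \<noteq> 0" using assms(2,3) by simp
  have "h (op x y) \<le> p * h x + q * h y" using assms(1) unfolding op_pq_convex_def by blast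
  also have "\<dots> \<le> p * (c * u) + q * (c * v)" using assms by (intro add_mono mult_left_mono) auto
  also have "\<dots> = (p + q) * c * (p / (p + q) * u + q / (p + q) * v)"
    using \<open>p + q \<noteq> 0\<close> by (simp add: divide_simps) (simp add: algebra_simps)
  finally show ?thesis .
qed

locale pq_convex_pair =
  fixes op :: "'a \<Rightarrow> 'a \<Rightarrow> 'a" and p q :: real and f g :: "'a \<Rightarrow> real"
  assumes p_pos: "p > 0" and q_pos: "q > 0"
    and convex_f: "op_pq_convex op p q f" and convex_g: "op_pq_convex op p q g"
begin

definition dominated :: "real \<Rightarrow> real \<Rightarrow> bool" where
  "dominated u v \<longleftrightarrow> (\<exists>n x. f x \<le> (p + q) ^ n * u \<and> g x \<le> (p + q) ^ n * v)"

lemma dominated_values: "dominated (f x) (g x)"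
  unfolding dominated_def by (rule exI[of _ 0]) auto

lemma dominated_by_pow_mono:
  assumes "f x \<le> (p + q) ^ m * u" "g x \<le> (p + q) ^ m * v" and "m \<le> n"
  shows "\<exists>y. f y \<le> (p + q) ^ n * u \<and> g y \<le> (p + q) ^ n * v"
  using \<open>m \<le> n\<close>
proof (induction n rule: dec_induct)
  case base
  then show ?case using assms by blast
next
  case (step n)
  then obtain y where "f y \<le> (p + q) ^ n * u" "g y \<le> (p + q) ^ n * v" by blast
  then have "(p + q) * f y \<le> (p + q) ^ Suc n * u" "(p + q) * g y \<le> (p + q) ^ Suc n * v"
    using p_pos q_pos by simp_all
  then show ?case
    using op_pq_convex_diag_le[OF convex_f, of y] op_pq_convex_diag_le[OF convex_g, of y]
    by (meson order_trans)
qed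

lemma dominated_convex_comb:
  assumes "dominated u1 v1" and "dominated u2 v2"
  shows "dominated (p / (p + q) * u1 + q / (p + q) * u2) (p / (p + q) * v1 + q / (p + q) * v2)"
proof -
  obtain n1 x1 n2 x2 where
    x1: "f x1 \<le> (p + q) ^ n1 * u1" "g x1 \<le> (p + q) ^ n1 * v1" and
    x2: "f x2 \<le> (p + q) ^ n2 * u2" "g x2 \<le> (p + q) ^ n2 * v2"
    using assms unfolding dominated_def by blast
  obtain y1 where "f y1 \<le> (p + q) ^ max n1 n2 * u1" "g y1 \<le> (p + q) ^ max n1 n2 * v1"
    using dominated_by_pow_mono[OF x1 max.cobounded1] by blast
  moreover obtain y2 where "f y2 \<le> (p + q) ^ max n1 n2 * u2" "g y2 \<le> (p + q) ^ max n1 n2 * v2"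
    using dominated_by_pow_mono[OF x2 max.cobounded2] by blast
  ultimately have
    "f (op y1 y2) \<le> (p + q) * (p + q) ^ max n1 n2 * (p / (p + q) * u1 + q / (p + q) * u2)"
    "g (op y1 y2) \<le> (p + q) * (p + q) ^ max n1 n2 * (p / (p + q) * v1 + q / (p + q) * v2)"
    using op_pq_convex_comb_le[OF convex_f] op_pq_convex_comb_le[OF convex_g] p_pos q_pos by blast+
  then show ?thesis
    unfolding dominated_def by (intro exI[of _ "Suc (max n1 n2)"] exI[of _ "op y1 y2"]) simp
qed

lemma dominated_max_nonneg:
  assumes "\<And>x. 0 \<le> max (f x) (g x)" and "dominated u v"
  shows "0 \<le> max u v"
proof (rule ccontr)
  assume "\<not> 0 \<le> max u v"
  then have "u < 0" "v < 0" by auto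
  moreover obtain n x where "f x \<le> (p + q) ^ n * u" "g x \<le> (p + q) ^ n * v"
    using assms(2) unfolding dominated_def by blast
  moreover have "(p + q) ^ n > 0" using p_pos q_pos by simp
  ultimately have "f x < 0" "g x < 0" by (meson mult_pos_neg order_le_less_trans)+
  with assms(1)[of x] show False by simp
qed

lemma values_cross_le:
  assumes max_nonneg: "\<And>x. 0 \<le> max (f x) (g x)" and fa: "f a < 0" and gb: "g b < 0"
  shows "f a * g b \<le> g a * f b"
proof (rule ccontr)
  assume cross: "\<not> ?thesis"
  have fb: "f b \<ge> 0" and ga: "g a \<ge> 0"
    using max_nonneg[of a] max_nonneg[of b] fa gb by (auto simp: le_max_iff_disj)
  (* zeros of the two coordinates of \<theta> (f a, g a) + (1 - \<theta>) (f b, g b) *)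
  define \<theta>f \<theta>g where "\<theta>f = f b / (f b - f a)" and "\<theta>g = g b / (g b - g a)"
  have bounds: "0 \<le> \<theta>f" "\<theta>f < \<theta>g" "\<theta>g \<le> 1"
    unfolding \<theta>f_def \<theta>g_def using fa gb fb ga cross
    by (simp_all add: divide_simps) (simp add: algebra_simps)
  define r where "r = p / (p + q)"
  have r: "0 < r" "r < 1" "1 - r = q / (p + q)"
    unfolding r_def using p_pos q_pos by (auto simp: field_simps)
  define T where "T = {\<theta>. dominated (\<theta> * f a + (1 - \<theta>) * f b) (\<theta> * g a + (1 - \<theta>) * g b)}"
  have "0 \<in> T" "1 \<in> T" unfolding T_def using dominated_values by auto
  have closed: "r * \<theta>1 + (1 - r) * \<theta>2 \<in> T" if "\<theta>1 \<in> T" "\<theta>2 \<in> T" for \<theta>1 \<theta>2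
  proof -
    have affine: "(r * \<theta>1 + (1 - r) * \<theta>2) * u + (1 - (r * \<theta>1 + (1 - r) * \<theta>2)) * w
        = r * (\<theta>1 * u + (1 - \<theta>1) * w) + (1 - r) * (\<theta>2 * u + (1 - \<theta>2) * w)" for u w :: real
      by algebra
    show ?thesis
      unfolding T_def mem_Collect_eq affine unfolding r(3) unfolding r_def
      by (rule dominated_convex_comb[OF that[unfolded T_def mem_Collect_eq]])
  qed
  obtain \<theta> where "\<theta> \<in> T" "\<theta>f < \<theta>" "\<theta> < \<theta>g"
    using convex_comb_closed_dense[OF \<open>0 \<in> T\<close> \<open>1 \<in> T\<close> r(1,2) closed bounds] by blast
  have "\<theta> * f a + (1 - \<theta>) * f b < 0"
    using \<open>\<theta>f < \<theta>\<close> fa fb unfolding \<theta>f_def by (simp add: pos_divide_less_eq algebra_simps)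
  moreover have "\<theta> * g a + (1 - \<theta>) * g b < 0"
    using \<open>\<theta> < \<theta>g\<close> gb ga unfolding \<theta>g_def by (simp add: neg_less_divide_eq algebra_simps)
  moreover have "0 \<le> max (\<theta> * f a + (1 - \<theta>) * f b) (\<theta> * g a + (1 - \<theta>) * g b)"
    using dominated_max_nonneg[OF max_nonneg] \<open>\<theta> \<in> T\<close> unfolding T_def by blast
  ultimately show False by linarith
qed

lemma crossing_le:
  assumes max_nonneg: "\<And>x. 0 \<le> max (f x) (g x)" and "f a < 0" and "g b < 0"
  shows "crossing (f b) (g b) \<le> crossing (f a) (g a)"
proof -
  have "f a < g a" "g b < f b" using max_nonneg[of a] max_nonneg[of b] assms(2,3) by auto
  then show ?thesis using values_cross_le[OF assms] unfolding crossing_def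
    by (simp add: divide_simps) (simp add: algebra_simps)
qed

end

theorem theorem3p5:
  fixes op :: "'a \<Rightarrow> 'a \<Rightarrow> 'a" and p q :: real and f g :: "'a \<Rightarrow> real"
  assumes "p > 0" and "q > 0"
    and "op_pq_convex op p q f" and "op_pq_convex op p q g"
    and "\<And>x. 0 \<le> max (f x) (g x)"
  shows "\<exists>lam\<in>{0..1::real}. \<forall>x. 0 \<le> lam * f x + (1 - lam) * g x"
proof -
  interpret pq_convex_pair op p q f g using assms by unfold_locales
  let ?c = "\<lambda>x. crossing (f x) (g x)"
  have range_g: "?c ` {x. g x < 0} \<subseteq> {0..1}" and range_f: "?c ` {x. f x < 0} \<subseteq> {0..1}"
    using crossing_in_unit_interval[OF assms(5)] by auto
  have ordered: "l \<le> u" if "l \<in> ?c ` {x. g x < 0}" and "u \<in> ?c ` {x. f x < 0}" for l u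
    using that crossing_le[OF assms(5)] by auto
  obtain lam where lam: "lam \<in> {0..1}"
    "\<forall>l \<in> ?c ` {x. g x < 0}. l \<le> lam" "\<forall>u \<in> ?c ` {x. f x < 0}. lam \<le> u"
    using unit_interval_separation[OF range_g range_f ordered] by blast
  have "0 \<le> lam * f x + (1 - lam) * g x" for x
    using lam(2,3) by (intro convex_comb_nonneg_by_crossing[OF assms(5) lam(1)]) auto
  with lam(1) show ?thesis by blast
qed

end
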